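(* Let $r\ge2$ and let $\mathcal{P}$ be a set of $m\ge2$ non-collectable $r$-patterns. Then every $\mathcal P$-clique has size smaller than the multicolor Ramsey number $R_m(3)$. In particular, if $m=2$, every $\mathcal P$-clique has at most $5$ edges.
   Context: An ordered $r$-matching is a set of pairwise disjoint $r$-element subsets (edges) of a linearly ordered vertex set covering it. An $r$-pattern is an ordered $r$-matching of size 2, written as a word over $\{A,B\}$ (each letter $r$ times, starting with $A$). Two edges form pattern $P$ if they induce a matching order-isomorphic to $P$; a $\mathcal P$-clique is an ordered matching all of whose pairs of edges form patterns in $\mathcal P$. An $r$-pattern is collectable if it can be split into consecutive blocks each of the form $A^tB^t$ or $B^tA^t$ ($t\ge1$); otherwise it is non-collectable. $R_m(3)$ is the least $N$ such that every coloring of the edges of the complete graph $K_N$ with $m$ colors contains a monochromatic triangle. *)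

theory Defs
  imports Main
begin

datatype letter = A | B

definition is_pattern :: "nat \<Rightarrow> letter list \<Rightarrow> bool" where
  "is_pattern r w \<longleftrightarrow> length w = 2 * r \<and> count_list w A = r \<and> count_list w B = r
     \<and> w \<noteq> [] \<and> hd w = A"

definition is_block :: "letter list \<Rightarrow> bool" where
  "is_block b \<longleftrightarrow> (\<exists>t\<ge>1. b = replicate t A @ replicate t B \<or> b = replicate t B @ replicate t A)"

definition collectable :: "letter list \<Rightarrow> bool" where
  "collectable w \<longleftrightarrow> (\<exists>bs. concat bs = w \<and> (\<forall>b\<in>set bs. is_block b))"

text \<open>Ordered r-matching on a linearly ordered vertex set (the vertex set is the union of the edges).\<close>
definition ordered_matching :: "nat \<Rightarrow> 'a::linorder set set \<Rightarrow> bool" where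
  "ordered_matching r M \<longleftrightarrow> finite M \<and> (\<forall>e\<in>M. finite e \<and> card e = r)
     \<and> (\<forall>e\<in>M. \<forall>f\<in>M. e \<noteq> f \<longrightarrow> e \<inter> f = {})"

definition pattern_of :: "'a::linorder set \<Rightarrow> 'a set \<Rightarrow> letter list" where
  "pattern_of e f = (let g = (if Min e < Min f then e else f) in
     map (\<lambda>x. if x \<in> g then A else B) (sorted_list_of_set (e \<union> f)))"

definition P_clique :: "nat \<Rightarrow> letter list set \<Rightarrow> 'a::linorder set set \<Rightarrow> bool" where
  "P_clique r P M \<longleftrightarrow> ordered_matching r M \<and>
     (\<forall>e\<in>M. \<forall>f\<in>M. e \<noteq> f \<longrightarrow> pattern_of e f \<in> P)"

definition arrows_triangle :: "nat \<Rightarrow> nat \<Rightarrow> bool" where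
  "arrows_triangle m N \<longleftrightarrow> (\<forall>c :: nat \<Rightarrow> nat \<Rightarrow> nat.
      (\<forall>i j. i < j \<and> j < N \<longrightarrow> c i j < m) \<longrightarrow>
      (\<exists>i j k. i < j \<and> j < k \<and> k < N \<and> c i j = c j k \<and> c i j = c i k))"

definition multicolor_ramsey3 :: "nat \<Rightarrow> nat" where
  "multicolor_ramsey3 m = (LEAST N. arrows_triangle m N)"

end

theory Submission
  imports Defs "HOL-Library.FuncSet"
begin

(* Colour each pair of edges of a P-clique by the pattern it forms. Suppose three edges, listed
   by first vertex, formed one pattern w. Labelling each vertex of their union by its edge (a, b
   or c) gives a word all of whose two-letter projections equal w. If w begins with a maximal run
   A^t, the word must begin with a^t b^t c^t, so w begins with the block A^t B^t and the rest of
   the word again has equal projections; exchanging a and c handles a leading B. By induction w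
   is collectable. So the colouring with m colours has no monochromatic triangle, and the clique
   has fewer than R_m(3) edges; R_2(3) \<le> 6 follows from the pigeonhole recursion
   R_(m+1)(3) \<le> (m+1) (R_m(3) - 1) + 2. *)

fun dual :: "letter \<Rightarrow> letter" where
  "dual A = B"
| "dual B = A"

lemma dual_involution [simp]: "dual \<circ> dual = id"
proof
  show "(dual \<circ> dual) x = id x" for x by (cases x) simp_all
qed

definition proj :: "'b \<Rightarrow> 'b \<Rightarrow> 'b list \<Rightarrow> letter list" where
  "proj a b w = map (\<lambda>x. if x = a then A else B) (filter (\<lambda>x. x = a \<or> x = b) w)"

lemma proj_Nil [simp]: "proj a b [] = []"
  and proj_Cons [simp]:
    "proj a b (x # w) =
      (if x = a then A # proj a b w else if x = b then B # proj a b w else proj a b w)"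
  and proj_append [simp]: "proj a b (u @ v) = proj a b u @ proj a b v"
  by (auto simp: proj_def)

lemma proj_replicate [simp]:
  "proj a b (replicate k x) = (if x = a then replicate k A else if x = b then replicate k B else [])"
  by (induction k) auto

lemma proj_swap: "a \<noteq> b \<Longrightarrow> proj b a w = map dual (proj a b w)"
  by (induction w) auto

lemma proj_map:
  "proj a b (map f xs) = map (\<lambda>v. if f v = a then A else B) (filter (\<lambda>v. f v = a \<or> f v = b) xs)"
  by (simp add: proj_def filter_map comp_def)

lemma replicate_prefix_if_projs_start_with_run:
  assumes "distinct [a, b, c]" "set w \<subseteq> {a, b, c}"
    and "proj a b w = replicate k A @ u" "proj a c w = replicate k A @ v"
  shows "\<exists>w'. w = replicate k a @ w'"
  using assms(2-)
proof (induction k arbitrary: w)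
  case (Suc k)
  then obtain x w1 where "w = x # w1" by (cases w) auto
  with Suc assms(1) show ?case by (auto dest!: Suc.IH)
qed simp

lemma replicate_prefix_if_proj_starts_with_run:
  assumes "distinct [a, b, c]" "set w \<subseteq> {a, b, c}"
    and "proj a b w = replicate k A @ u" "\<forall>v. proj c b w \<noteq> A # v"
  shows "\<exists>w'. w = replicate k a @ w'"
  using assms(2-)
proof (induction k arbitrary: w)
  case (Suc k)
  then obtain x w1 where "w = x # w1" by (cases w) auto
  with Suc assms(1) show ?case by (auto dest!: Suc.IH)
qed simp

lemma collectable_Nil: "collectable []"
  unfolding collectable_def by (auto intro: exI[of _ "[]"])

lemma collectable_append_block: "is_block b \<Longrightarrow> collectable R \<Longrightarrow> collectable (b @ R)"
  unfolding collectable_def by (metis concat.simps(2) set_ConsD)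

lemma is_block_AB: "t \<ge> 1 \<Longrightarrow> is_block (replicate t A @ replicate t B)"
  and is_block_BA: "t \<ge> 1 \<Longrightarrow> is_block (replicate t B @ replicate t A)"
  unfolding is_block_def by blast+

lemma maximal_initial_run:
  obtains t rest where "xs = replicate t x @ rest" "\<forall>v. rest \<noteq> x # v"
proof
  show "xs = replicate (length (takeWhile ((=) x) xs)) x @ dropWhile ((=) x) xs"
    by (metis (mono_tags) replicate_length_same set_takeWhileD takeWhile_dropWhile_id)
  show "\<forall>v. dropWhile ((=) x) xs \<noteq> x # v"
    using hd_dropWhile[of "(=) x" xs] by fastforce
qed

lemma projections_agree_first_block:
  assumes abc: "distinct [a, b, c]" "set w \<subseteq> {a, b, c}"
    and Q: "proj a b w = Q" "proj b c w = Q" "proj a c w = Q"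
    and Q_A: "Q = A # Q'"
  obtains t R w' where "t \<ge> 1" "Q = replicate t A @ replicate t B @ R"
    "w = replicate t a @ replicate t b @ replicate t c @ w'" "set w' \<subseteq> {a, b, c}"
    "proj a b w' = R" "proj b c w' = R" "proj a c w' = R"
proof -
  obtain t rest where Q_run: "Q = replicate t A @ rest" and rest: "\<forall>v. rest \<noteq> A # v"
    by (rule maximal_initial_run)
  have t: "t \<ge> 1" using Q_run rest Q_A by (cases t) auto
  have ne: "a \<noteq> b" "b \<noteq> a" "a \<noteq> c" "c \<noteq> a" "b \<noteq> c" "c \<noteq> b" using abc by auto
  obtain w1 where w1: "w = replicate t a @ w1"
    using replicate_prefix_if_projs_start_with_run[OF abc] Q Q_run by metis
  have w1_proj: "proj a b w1 = rest" "proj a c w1 = rest" "proj b c w1 = replicate t A @ rest"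
    using Q Q_run ne unfolding w1 by auto
  \<comment> \<open>The A^t opening proj b c w1 are letters b, and no a precedes them: rest has no leading A.\<close>
  obtain w2 where w2: "w1 = replicate t b @ w2"
    using replicate_prefix_if_proj_starts_with_run[of b c a w1 t rest] abc w1 w1_proj rest by auto
  define R where "R = proj a b w2"
  have rest_R: "rest = replicate t B @ R"
    using w1_proj(1) ne unfolding w2 R_def by simp
  have w2_proj: "proj b c w2 = replicate t B @ R" "proj a c w2 = replicate t B @ R"
    using w1_proj ne rest_R unfolding w2 by auto
  then have "proj c b w2 = replicate t A @ map dual R" "proj c a w2 = replicate t A @ map dual R"
    using ne by (simp_all add: proj_swap[of b c] proj_swap[of a c])
  moreover have "set w2 \<subseteq> {c, b, a}" using abc(2) unfolding w1 w2 by auto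
  ultimately obtain w' where w': "w2 = replicate t c @ w'"
    using replicate_prefix_if_projs_start_with_run[of c b a w2 t] ne by auto
  show thesis
  proof
    show "w = replicate t a @ replicate t b @ replicate t c @ w'" using w1 w2 w' by simp
    then show "set w' \<subseteq> {a, b, c}" using abc by auto
    show "proj a b w' = R" "proj b c w' = R" "proj a c w' = R"
      using ne w2_proj unfolding R_def w' by auto
  qed (use t Q_run rest_R in auto)
qed

lemma collectable_if_projections_agree:
  assumes "distinct [a, b, c]" "set w \<subseteq> {a, b, c}"
    and "proj a b w = Q" "proj b c w = Q" "proj a c w = Q"
  shows "collectable Q"
  using assms
proof (induction "length w" arbitrary: a b c w Q rule: less_induct)
  case less
  show ?case
  proof (cases Q)
    case Nil
    then show ?thesis by (simp add: collectable_Nil)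
  next
    case (Cons x Q')
    show ?thesis
    proof (cases x)
      case A
      then have "Q = A # Q'" using Cons by simp
      then obtain t R w' where t: "t \<ge> 1" and Q: "Q = replicate t A @ replicate t B @ R"
        and w: "w = replicate t a @ replicate t b @ replicate t c @ w'"
        and w': "set w' \<subseteq> {a, b, c}" "proj a b w' = R" "proj b c w' = R" "proj a c w' = R"
        by (rule projections_agree_first_block[OF less.prems])
      have "length w' < length w" using w t by simp
      then have "collectable R" using less.hyps less.prems(1) w' by blast
      then show ?thesis using collectable_append_block[OF is_block_AB[OF t]] Q by simp
    next
      case B
      \<comment> \<open>Exchanging the roles of a and c exchanges A and B, reducing to the previous case.\<close>
      have cba: "distinct [c, b, a]" "set w \<subseteq> {c, b, a}" using less.prems by auto
      have ne: "a \<noteq> b" "b \<noteq> a" "a \<noteq> c" "c \<noteq> a" "b \<noteq> c" "c \<noteq> b"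
        using less.prems(1) by auto
      have "proj c b w = map dual Q" "proj b a w = map dual Q" "proj c a w = map dual Q"
        using less.prems(3-5) proj_swap[OF ne(5), of w] proj_swap[OF ne(1), of w]
          proj_swap[OF ne(3), of w]
        by simp_all
      moreover have "map dual Q = A # map dual Q'" using Cons B by simp
      ultimately obtain t R w' where t: "t \<ge> 1"
        and Q: "map dual Q = replicate t A @ replicate t B @ R"
        and w: "w = replicate t c @ replicate t b @ replicate t a @ w'"
        and w': "set w' \<subseteq> {c, b, a}"
        and w'_proj: "proj c b w' = R" "proj b a w' = R" "proj c a w' = R"
        by (rule projections_agree_first_block[OF cba])
      have "proj a b w' = map dual R" "proj b c w' = map dual R" "proj a c w' = map dual R"
        using w'_proj proj_swap[OF ne(2), of w'] proj_swap[OF ne(6), of w']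
          proj_swap[OF ne(4), of w']
        by simp_all
      moreover have "length w' < length w" using w t by simp
      ultimately have "collectable (map dual R)"
        using less.hyps less.prems(1) w' by (simp add: insert_commute)
      moreover have "Q = replicate t B @ replicate t A @ map dual R"
        using arg_cong[OF Q, of "map dual"] by simp
      ultimately show ?thesis using collectable_append_block[OF is_block_BA[OF t]] by simp
    qed
  qed
qed

lemma filter_sorted_list_of_set:
  assumes "finite S"
  shows "filter P (sorted_list_of_set S) = sorted_list_of_set {x \<in> S. P x}"
proof -
  let ?L = "sorted_list_of_set S"
  have "sorted_list_of_set (set (filter P ?L)) = filter P ?L"
    unfolding sorted_list_of_set_sort_remdups
    by (simp add: distinct_remdups_id sorted_wrt_filter sorted_sort_id)
  moreover have "set (filter P ?L) = {x \<in> S. P x}" using assms by auto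
  ultimately show ?thesis by simp
qed

lemma proj_map_sorted_list_of_set:
  assumes "finite S" "{v \<in> S. lab v = i \<or> lab v = j} = U"
    and "\<And>v. v \<in> U \<Longrightarrow> lab v = i \<longleftrightarrow> v \<in> X"
  shows "proj i j (map lab (sorted_list_of_set S))
    = map (\<lambda>v. if v \<in> X then A else B) (sorted_list_of_set U)"
proof -
  have "finite U" using assms(1,2) by auto
  then show ?thesis
    using assms by (auto simp: proj_map filter_sorted_list_of_set intro!: map_cong)
qed

lemma pattern_of_if_Min_less:
  "Min e < Min f \<Longrightarrow> pattern_of e f = map (\<lambda>v. if v \<in> e then A else B) (sorted_list_of_set (e \<union> f))"
  unfolding pattern_of_def by simp

lemma collectable_if_three_edges_same_pattern:
  fixes X Y Z :: "'a::linorder set"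
  assumes fin: "finite X" "finite Y" "finite Z"
    and disj: "X \<inter> Y = {}" "Y \<inter> Z = {}" "X \<inter> Z = {}"
    and ord: "Min X < Min Y" "Min Y < Min Z"
    and pat: "pattern_of X Y = Q" "pattern_of Y Z = Q" "pattern_of X Z = Q"
  shows "collectable Q"
proof -
  define lab :: "'a \<Rightarrow> nat" where
    "lab v = (if v \<in> X then 0 else if v \<in> Y then 1 else 2)" for v
  define w where "w = map lab (sorted_list_of_set (X \<union> Y \<union> Z))"
  have "proj 0 1 w = pattern_of X Y"
    unfolding w_def pattern_of_if_Min_less[OF ord(1)]
    by (rule proj_map_sorted_list_of_set) (use fin in \<open>auto simp: lab_def\<close>)
  moreover have "proj 1 2 w = pattern_of Y Z"
    unfolding w_def pattern_of_if_Min_less[OF ord(2)]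
    by (rule proj_map_sorted_list_of_set) (use fin disj in \<open>auto simp: lab_def\<close>)
  moreover have "proj 0 2 w = pattern_of X Z"
    unfolding w_def pattern_of_if_Min_less[OF less_trans[OF ord]]
    by (rule proj_map_sorted_list_of_set) (use fin disj in \<open>auto simp: lab_def\<close>)
  moreover have "set w \<subseteq> {0, 1, 2}" by (auto simp: w_def lab_def)
  ultimately show ?thesis
    using collectable_if_projections_agree[of 0 1 2 w Q] pat by simp
qed

lemma obtain_sorted_key_list:
  fixes key :: "'v \<Rightarrow> 'k::linorder"
  assumes "finite V" "inj_on key V"
  obtains l where "sorted_wrt (<) (map key l)" "set l = V" "length l = card V"
proof -
  interpret folding_insort_key "(\<le>)" "(<)" V key by unfold_locales (rule assms(2))
  show thesis using finite_set_strict_sorted[OF order_refl assms(1)] that by blast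
qed

lemma arrows_triangle_monochromatic:
  fixes c :: "'v \<Rightarrow> 'v \<Rightarrow> 'b" and key :: "'v \<Rightarrow> 'k::linorder"
  assumes arrows: "arrows_triangle m N"
    and V: "finite V" "inj_on key V" "N \<le> card V"
    and C: "finite C" "card C \<le> m"
    and colouring: "\<And>x y. x \<in> V \<Longrightarrow> y \<in> V \<Longrightarrow> key x < key y \<Longrightarrow> c x y \<in> C"
  obtains x y z where "x \<in> V" "y \<in> V" "z \<in> V" "key x < key y" "key y < key z"
    "c x y = c y z" "c x y = c x z"
proof -
  obtain l where l: "sorted_wrt (<) (map key l)" "set l = V" "length l = card V"
    using obtain_sorted_key_list[OF V(1,2)] by blast
  obtain h where h: "bij_betw h C {0..<card C}"
    using ex_bij_betw_finite_nat[OF C(1)] by blast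
  have l_in: "l ! i \<in> V" if "i < N" for i
    using nth_mem[of i l] l(2,3) V(3) that by simp
  have key_less: "key (l ! i) < key (l ! j)" if "i < j" "j < N" for i j
    using sorted_wrt_nth_less[OF l(1), of i j] l(3) V(3) that by simp
  have colour_in: "c (l ! i) (l ! j) \<in> C" if "i < j" "j < N" for i j
    using colouring[OF l_in[of i] l_in[of j] key_less[OF that]] that by simp
  have "h (c (l ! i) (l ! j)) < m" if "i < j" "j < N" for i j
    using bij_betw_apply[OF h colour_in[OF that]] C(2) by simp
  then have "\<forall>i j. i < j \<and> j < N \<longrightarrow> h (c (l ! i) (l ! j)) < m" by blast
  from mp[OF spec[OF arrows[unfolded arrows_triangle_def], of "\<lambda>i j. h (c (l ! i) (l ! j))"] this]
  obtain i j k where ijk: "i < j" "j < k" "k < N"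
      "h (c (l ! i) (l ! j)) = h (c (l ! j) (l ! k))"
      "h (c (l ! i) (l ! j)) = h (c (l ! i) (l ! k))"
    by blast
  have "inj_on h C" using h by (simp add: bij_betw_def)
  moreover have "c (l ! i) (l ! j) \<in> C" "c (l ! j) (l ! k) \<in> C" "c (l ! i) (l ! k) \<in> C"
    using colour_in ijk(1-3) by simp_all
  ultimately have "c (l ! i) (l ! j) = c (l ! j) (l ! k)" "c (l ! i) (l ! j) = c (l ! i) (l ! k)"
    using ijk(4,5) by (simp_all add: inj_on_eq_iff)
  moreover have "i < N" "j < N" using ijk(1-3) by simp_all
  ultimately show thesis
    using that[of "l ! i" "l ! j" "l ! k"] l_in key_less ijk(1-3) by simp
qed

lemma arrows_triangle_zero: "arrows_triangle 0 2"
  unfolding arrows_triangle_def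
proof (intro allI impI)
  fix c :: "nat \<Rightarrow> nat \<Rightarrow> nat"
  assume "\<forall>i j. i < j \<and> j < 2 \<longrightarrow> c i j < 0"
  from this[rule_format, of 0 1]
  show "\<exists>i j k. i < j \<and> j < k \<and> k < 2 \<and> c i j = c j k \<and> c i j = c i k" by simp
qed

lemma arrows_triangle_Suc:
  assumes arrows: "arrows_triangle m N" and "1 \<le> N"
  shows "arrows_triangle (Suc m) (Suc m * (N - 1) + 2)"
proof -
  define N' where "N' = Suc m * (N - 1) + 2"
  have "\<exists>i j k. i < j \<and> j < k \<and> k < N' \<and> c i j = c j k \<and> c i j = c i k"
    if colouring: "\<forall>i j. i < j \<and> j < N' \<longrightarrow> c i j < Suc m" for c :: "nat \<Rightarrow> nat \<Rightarrow> nat"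
  proof -
    have "c 0 \<in> {1..<N'} \<rightarrow> {..<Suc m}" using colouring by auto
    then obtain \<kappa> where \<kappa>: "\<kappa> < Suc m"
      and pigeon: "card {1..<N'} \<le> card (c 0 -` {\<kappa>} \<inter> {1..<N'}) * Suc m"
      using pigeonhole_card[of "c 0" "{1..<N'}" "{..<Suc m}"] by auto
    define V where "V = c 0 -` {\<kappa>} \<inter> {1..<N'}"
    have "card {1..<N'} = (N - 1) * Suc m + 1" by (simp add: N'_def)
    with pigeon have "(N - 1) * Suc m < card V * Suc m" unfolding V_def by linarith
    then have "N \<le> card V" using \<open>1 \<le> N\<close> by (simp only: mult_less_cancel2) linarith
    show ?thesis
    proof (cases "\<exists>i\<in>V. \<exists>j\<in>V. i < j \<and> c i j = \<kappa>")
      case True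
      then obtain i j where "i \<in> V" "j \<in> V" "i < j" "c i j = \<kappa>" by blast
      then show ?thesis by (intro exI[of _ 0] exI[of _ i] exI[of _ j]) (auto simp: V_def)
    next
      case False
      have "c i j \<in> {..<Suc m} - {\<kappa>}" if "i \<in> V" "j \<in> V" "i < j" for i j
        using colouring False that by (auto simp: V_def)
      moreover have "finite V" "inj_on (\<lambda>x. x) V" by (simp_all add: V_def)
      moreover have "finite ({..<Suc m} - {\<kappa>})" "card ({..<Suc m} - {\<kappa>}) \<le> m"
        using \<kappa> by simp_all
      ultimately obtain i j k where
        "i \<in> V" "j \<in> V" "k \<in> V" "i < j" "j < k" "c i j = c j k" "c i j = c i k"
        using arrows_triangle_monochromatic[OF arrows, where V = V and key = "\<lambda>x. x"
            and C = "{..<Suc m} - {\<kappa>}" and c = c] \<open>N \<le> card V\<close>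
        by blast
      then show ?thesis by (intro exI[of _ i] exI[of _ j] exI[of _ k]) (auto simp: V_def)
    qed
  qed
  then show ?thesis unfolding arrows_triangle_def N'_def by blast
qed

lemma arrows_triangle_exists: "\<exists>N. arrows_triangle m N"
proof -
  have "\<exists>N\<ge>1. arrows_triangle m N"
  proof (induction m)
    case 0
    then show ?case using arrows_triangle_zero by (intro exI[of _ 2]) auto
  next
    case (Suc m)
    then obtain N where "N \<ge> 1" "arrows_triangle m N" by blast
    then show ?case using arrows_triangle_Suc by (intro exI[of _ "Suc m * (N - 1) + 2"]) auto
  qed
  then show ?thesis by blast
qed

lemma arrows_triangle_2_6: "arrows_triangle 2 6"
proof -
  have "arrows_triangle 1 3"
    using arrows_triangle_Suc[OF arrows_triangle_zero] by (simp add: numeral_3_eq_3)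
  then have "arrows_triangle (Suc 1) (Suc 1 * (3 - 1) + 2)" by (rule arrows_triangle_Suc) simp
  then show ?thesis by (simp add: eval_nat_numeral)
qed

lemma arrows_triangle_multicolor_ramsey3: "arrows_triangle m (multicolor_ramsey3 m)"
  unfolding multicolor_ramsey3_def by (rule LeastI_ex[OF arrows_triangle_exists])

lemma multicolor_ramsey3_2_le_6: "multicolor_ramsey3 2 \<le> 6"
  unfolding multicolor_ramsey3_def by (rule Least_le[of "arrows_triangle 2", OF arrows_triangle_2_6])

lemma card_P_clique_less_multicolor_ramsey3:
  assumes "0 < r" "finite P" "\<forall>w\<in>P. \<not> collectable w" "P_clique r P M"
  shows "card M < multicolor_ramsey3 (card P)"
proof (rule ccontr)
  assume "\<not> card M < multicolor_ramsey3 (card P)"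
  then have "multicolor_ramsey3 (card P) \<le> card M" by simp
  have M: "finite M" "\<And>e. e \<in> M \<Longrightarrow> finite e \<and> card e = r"
    "\<And>e f. e \<in> M \<Longrightarrow> f \<in> M \<Longrightarrow> e \<noteq> f \<Longrightarrow> e \<inter> f = {}"
    and pattern: "\<And>e f. e \<in> M \<Longrightarrow> f \<in> M \<Longrightarrow> e \<noteq> f \<Longrightarrow> pattern_of e f \<in> P"
    using assms(4) unfolding P_clique_def ordered_matching_def by auto
  have Min_in: "Min e \<in> e" if "e \<in> M" for e
    using M(2)[OF that] \<open>0 < r\<close> by (auto intro: Min_in)
  have "inj_on Min M"
    using M(3) Min_in by (fastforce intro: inj_onI)
  moreover have "pattern_of e f \<in> P" if "e \<in> M" "f \<in> M" "Min e < Min f" for e f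
    using pattern that by blast
  ultimately obtain X Y Z where XYZ: "X \<in> M" "Y \<in> M" "Z \<in> M" "Min X < Min Y" "Min Y < Min Z"
    and same: "pattern_of X Y = pattern_of Y Z" "pattern_of X Y = pattern_of X Z"
    using arrows_triangle_monochromatic[OF arrows_triangle_multicolor_ramsey3,
        where V = M and key = Min and C = P and c = pattern_of]
      M(1) assms(2) \<open>multicolor_ramsey3 (card P) \<le> card M\<close> by blast
  have "X \<noteq> Y" "Y \<noteq> Z" "X \<noteq> Z" using XYZ by auto
  then have "collectable (pattern_of X Y)"
    using M(2,3) XYZ same
    by (intro collectable_if_three_edges_same_pattern[of X Y Z]) auto
  moreover have "pattern_of X Y \<in> P" using pattern XYZ by blast
  ultimately show False using assms(3) by blast
qed

theorem mainTheorem11: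
  fixes r m :: nat and P :: "letter list set" and M :: "'a::linorder set set"
  assumes "r \<ge> 2" and "m \<ge> 2"
    and "finite P" and "card P = m"
    and "\<forall>w\<in>P. is_pattern r w \<and> \<not> collectable w"
    and "P_clique r P M"
  shows "card M < multicolor_ramsey3 m \<and> (m = 2 \<longrightarrow> card M \<le> 5)"
proof -
  have "card M < multicolor_ramsey3 m"
    using card_P_clique_less_multicolor_ramsey3[of r P M] assms by auto
  then show ?thesis using multicolor_ramsey3_2_le_6 by auto
qed

end
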